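(* In the qubit setting of the context: (i) problem (AD) has an optimal solution $R$ with $[R,W(\beta,\gamma,l)]=0$ for all $\beta,\gamma\in\mathbb{R}$, $l\in\{0,1\}$, and problem (PP) has an optimal solution $R_s$ with $[R_s,W(\beta,\gamma,l)]=0$ for all $\beta,\gamma,l$. (ii) If $R_s$ is feasible for (PP) with constants $\lambda_0,\lambda_1$ in the perfect retrieval condition, and $[R_s,W(\beta,\gamma,l)]=0$ for all $\beta,\gamma,l$, then $\lambda_0=\lambda_1$.
   Context: Fix an integer $n\ge1$ and real $\alpha$ with $0<\alpha<\pi/(4n)$. On $\mathbb{C}^2$ with computational basis $\{|0\rangle,|1\rangle\}$ let $|\pm\rangle=(|0\rangle\pm|1\rangle)/\sqrt2$, $\sigma_x,\sigma_z$ the Pauli matrices, $U_0=e^{i\alpha}|0\rangle\langle0|+e^{-i\alpha}|1\rangle\langle1|$, $U_1=e^{-i\alpha}|0\rangle\langle0|+e^{i\alpha}|1\rangle\langle1|$, $|\psi_{n,i}\rangle=U_i^n|+\rangle$ and $|\psi^*_{n,i}\rangle=(U_i^* )^n|+\rangle$ (complex conjugation in the computational basis). For $A=\sum_{ij}A_{ij}|i\rangle\langle j|$ set $|A\rangle\!\rangle:=\sum_{ij}A_{ij}|j\rangle|i\rangle$. Systems $\mathcal H_0$ (memory), $\mathcal H_1$ (input), $\mathcal H_2$ (output) are copies of $\mathbb{C}^2$. The Choi operator of a linear map $\mathcal R:L(\mathcal H_0\otimes\mathcal H_1)\to L(\mathcal H_2)$ is $R=(\mathcal I\otimes\mathcal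 R)(|I\rangle\!\rangle\langle\!\langle I|)\in L(\mathcal H_0\otimes\mathcal H_1\otimes\mathcal H_2)$. Let $D=\frac18\sum_{i=0,1}|\psi^*_{n,i}\rangle\langle\psi^*_{n,i}|\otimes|U_i\rangle\!\rangle\langle\!\langle U_i|$. Problem (AD): maximize $\mathrm{Tr}[RD]$ over $R\ge0$ with $\mathrm{Tr}_2R=I$. Problem (PP): maximize $\mathrm{Tr}[R_sD]$ over $R_s\ge0$ with $\mathrm{Tr}_2R_s\le I$ satisfying the perfect retrieval condition: there are $\lambda_0,\lambda_1\ge0$ with $\langle\psi^*_{n,i}|R_s|\psi^*_{n,i}\rangle=\lambda_i|U_i\rangle\!\rangle\langle\!\langle U_i|$ for $i=0,1$ (partial inner product on $\mathcal H_0$). Define $Z(\beta,\gamma)=e^{i\beta}|0\rangle\langle0|+e^{i\gamma}|1\rangle\langle1|$, $\sigma^{(0)}=I$, $\sigma^{(1)}=\sigma_x$, and $W(\beta,\gamma,l)=\sigma^{(l)}\otimes\sigma^{(l)}Z(\beta,\gamma)\otimes\sigma^{(l)}Z(\beta,\gamma)^*$ acting on $\mathcal H_0\otimes\mathcal H_1\otimes\mathcal H_2$. *)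

theory Defs
  imports Complex_Main
begin

text \<open>Qubit: computational basis indexed by bool (False = |0>, True = |1>).
  Operators are represented by their matrices in the computational basis,
  as functions row-index => column-index => complex.
  The three-qubit space H0 (x) H1 (x) H2 is indexed by triples (a0, a1, a2);
  H1 (x) H2 by pairs (a1, a2).\<close>

type_synonym 'i op = "'i \<Rightarrow> 'i \<Rightarrow> complex"
type_synonym 'i vec = "'i \<Rightarrow> complex"
type_synonym qb = bool
type_synonym idx2 = "bool \<times> bool"
type_synonym idx3 = "bool \<times> bool \<times> bool"

definition bit :: "bool \<Rightarrow> nat" where "bit b = (if b then 1 else 0)"

definition idop :: "('i::finite) op" where "idop x y = (if x = y then 1 else 0)"

definition opmult :: "('i::finite) op \<Rightarrow> 'i op \<Rightarrow> 'i op" where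
  "opmult A B x y = (\<Sum>z\<in>UNIV. A x z * B z y)"

definition trace :: "('i::finite) op \<Rightarrow> complex" where
  "trace A = (\<Sum>x\<in>UNIV. A x x)"

definition commutes :: "('i::finite) op \<Rightarrow> 'i op \<Rightarrow> bool" where
  "commutes A B \<longleftrightarrow> opmult A B = opmult B A"

definition psd :: "('i::finite) op \<Rightarrow> bool" where
  "psd A \<longleftrightarrow> (\<forall>v::'i vec. let q = (\<Sum>x\<in>UNIV. \<Sum>y\<in>UNIV. cnj (v x) * A x y * v y)
                      in q \<in> \<real> \<and> Re q \<ge> 0)"

definition ketbra :: "('i::finite) vec \<Rightarrow> 'i vec \<Rightarrow> 'i op" where
  "ketbra u v x y = u x * cnj (v y)"

definition conjop :: "qb op \<Rightarrow> qb op" where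
  "conjop A x y = cnj (A x y)"

definition tensor3 :: "qb op \<Rightarrow> qb op \<Rightarrow> qb op \<Rightarrow> idx3 op" where
  "tensor3 A B C = (\<lambda>(a0,a1,a2) (b0,b1,b2). A a0 b0 * B a1 b1 * C a2 b2)"

definition tensor12 :: "qb op \<Rightarrow> idx2 op \<Rightarrow> idx3 op" where
  "tensor12 A B = (\<lambda>(a0,a1,a2) (b0,b1,b2). A a0 b0 * B (a1,a2) (b1,b2))"

text \<open>Double ket: |A>> = sum_ij A_ij |j>|i>, a vector on H1 (x) H2.\<close>
definition dket :: "qb op \<Rightarrow> idx2 vec" where
  "dket A = (\<lambda>(j,i). A i j)"

definition plus_state :: "qb vec" where "plus_state x = 1 / complex_of_real (sqrt 2)"

definition sigma_x :: "qb op" where "sigma_x x y = (if x \<noteq> y then 1 else 0)"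
definition sigma_z :: "qb op" where "sigma_z x y = (if x = y then (if x then -1 else 1) else 0)"

text \<open>U_0 = diag(e^{i alpha}, e^{-i alpha}),  U_1 = diag(e^{-i alpha}, e^{i alpha}).\<close>
definition Uop :: "real \<Rightarrow> nat \<Rightarrow> qb op" where
  "Uop \<alpha> i x y = (if x = y then
       (if (i = 0) = (\<not> x) then cis \<alpha> else cis (- \<alpha>)) else 0)"

definition opapply :: "('i::finite) op \<Rightarrow> 'i vec \<Rightarrow> 'i vec" where
  "opapply A v x = (\<Sum>y\<in>UNIV. A x y * v y)"

definition oppow :: "('i::finite) op \<Rightarrow> nat \<Rightarrow> 'i op" where
  "oppow A k = (opmult A ^^ k) idop"

definition psi :: "real \<Rightarrow> nat \<Rightarrow> nat \<Rightarrow> qb vec" where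
  "psi \<alpha> n i = opapply (oppow (Uop \<alpha> i) n) plus_state"

definition psi_conj :: "real \<Rightarrow> nat \<Rightarrow> nat \<Rightarrow> qb vec" where
  "psi_conj \<alpha> n i = opapply (oppow (conjop (Uop \<alpha> i)) n) plus_state"

definition Dop :: "real \<Rightarrow> nat \<Rightarrow> idx3 op" where
  "Dop \<alpha> n x y = (1/8) * (\<Sum>i\<in>{0,1::nat}.
      tensor12 (ketbra (psi_conj \<alpha> n i) (psi_conj \<alpha> n i))
               (ketbra (dket (Uop \<alpha> i)) (dket (Uop \<alpha> i))) x y)"

definition ptrace2 :: "idx3 op \<Rightarrow> idx2 op" where
  "ptrace2 R = (\<lambda>(a0,a1) (b0,b1). \<Sum>c\<in>UNIV. R (a0,a1,c) (b0,b1,c))"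

definition pinner0 :: "qb vec \<Rightarrow> idx3 op \<Rightarrow> idx2 op" where
  "pinner0 \<phi> R = (\<lambda>(a1,a2) (b1,b2).
      \<Sum>a0\<in>UNIV. \<Sum>b0\<in>UNIV. cnj (\<phi> a0) * R (a0,a1,a2) (b0,b1,b2) * \<phi> b0)"

definition op_diff :: "('i::finite) op \<Rightarrow> 'i op \<Rightarrow> 'i op" where
  "op_diff A B x y = A x y - B x y"

definition op_scale :: "complex \<Rightarrow> ('i::finite) op \<Rightarrow> 'i op" where
  "op_scale c A x y = c * A x y"

definition AD_feasible :: "idx3 op \<Rightarrow> bool" where
  "AD_feasible R \<longleftrightarrow> psd R \<and> ptrace2 R = idop"

definition PP_feasible_with :: "real \<Rightarrow> nat \<Rightarrow> idx3 op \<Rightarrow> real \<Rightarrow> real \<Rightarrow> bool" where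
  "PP_feasible_with \<alpha> n R lam0 lam1 \<longleftrightarrow> psd R \<and> psd (op_diff idop (ptrace2 R)) \<and>
     lam0 \<ge> 0 \<and> lam1 \<ge> 0 \<and>
     pinner0 (psi_conj \<alpha> n 0) R = op_scale (complex_of_real lam0) (ketbra (dket (Uop \<alpha> 0)) (dket (Uop \<alpha> 0))) \<and>
     pinner0 (psi_conj \<alpha> n 1) R = op_scale (complex_of_real lam1) (ketbra (dket (Uop \<alpha> 1)) (dket (Uop \<alpha> 1)))"

definition PP_feasible :: "real \<Rightarrow> nat \<Rightarrow> idx3 op \<Rightarrow> bool" where
  "PP_feasible \<alpha> n R \<longleftrightarrow> (\<exists>lam0 lam1. PP_feasible_with \<alpha> n R lam0 lam1)"

text \<open>Objective Tr[R D] (real for Hermitian R, D; we maximise its real part).\<close>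
definition objective :: "real \<Rightarrow> nat \<Rightarrow> idx3 op \<Rightarrow> real" where
  "objective \<alpha> n R = Re (trace (opmult R (Dop \<alpha> n)))"

definition AD_optimal :: "real \<Rightarrow> nat \<Rightarrow> idx3 op \<Rightarrow> bool" where
  "AD_optimal \<alpha> n R \<longleftrightarrow> AD_feasible R \<and>
     (\<forall>R'. AD_feasible R' \<longrightarrow> objective \<alpha> n R' \<le> objective \<alpha> n R)"

definition PP_optimal :: "real \<Rightarrow> nat \<Rightarrow> idx3 op \<Rightarrow> bool" where
  "PP_optimal \<alpha> n R \<longleftrightarrow> PP_feasible \<alpha> n R \<and>
     (\<forall>R'. PP_feasible \<alpha> n R' \<longrightarrow> objective \<alpha> n R' \<le> objective \<alpha> n R)"

definition Zop :: "real \<Rightarrow> real \<Rightarrow> qb op" where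
  "Zop \<beta> \<gamma> x y = (if x = y then (if x then cis \<gamma> else cis \<beta>) else 0)"

definition sigma_l :: "nat \<Rightarrow> qb op" where
  "sigma_l l = (if l = 0 then idop else sigma_x)"

definition Wop :: "real \<Rightarrow> real \<Rightarrow> nat \<Rightarrow> idx3 op" where
  "Wop \<beta> \<gamma> l = tensor3 (sigma_l l) (opmult (sigma_l l) (Zop \<beta> \<gamma>))
                         (opmult (sigma_l l) (conjop (Zop \<beta> \<gamma>)))"

definition W_invariant :: "idx3 op \<Rightarrow> bool" where
  "W_invariant R \<longleftrightarrow> (\<forall>\<beta> \<gamma>. \<forall>l\<in>{0,1::nat}. commutes R (Wop \<beta> \<gamma> l))"

end

theory Submission
  imports Defs "HOL-Analysis.Analysis"
begin

text \<open>
  The operators \<open>W(\<beta>,\<gamma>,l)\<close> generate a compact group that preserves both feasible sets and commutes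
  with \<open>D\<close>, so averaging a solution over the group (twirling) keeps it feasible, keeps its
  objective value and makes it commute with every \<open>W\<close>. Concretely, \<open>Z(\<beta>,\<gamma>) \<otimes> Z(\<beta>,\<gamma>)\<^sup>*\<close>
  multiplies a basis state \<open>|a\<^sub>0 a\<^sub>1 a\<^sub>2\<rangle>\<close> by a phase depending only on its charge
  \<open>a\<^sub>1 - a\<^sub>2\<close>, so the phase average erases all entries between different charges, and
  \<open>\<sigma>\<^sub>x\<^sup>\<otimes>\<^sup>3\<close> contributes the average over the global bit flip. The flip exchanges the two
  perfect retrieval conditions; this gives \<open>\<lambda>\<^sub>0 = \<lambda>\<^sub>1\<close> for invariant solutions and shows that
  the twirl of a (PP)-feasible solution retrieves perfectly with \<open>(\<lambda>\<^sub>0 + \<lambda>\<^sub>1) / 2\<close>.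
  Optimal solutions exist because both feasible sets are closed and, by positivity and the
  partial trace bound, entrywise bounded.
\<close>

lemma sum_UNIV_bool: "(\<Sum>x\<in>(UNIV::bool set). f x) = f True + f False"
  by (simp add: UNIV_bool add.commute)

lemma if_zero_mult: "(if P then a else 0) * b = (if P then a * b else (0::'a::mult_zero))"
  by simp

lemma mult_if_zero: "b * (if P then a else 0) = (if P then b * a else (0::'a::mult_zero))"
  by simp

section \<open>Matrices\<close>

lemma opmult_reindex:
  fixes p :: "'i::finite \<Rightarrow> 'i"
  assumes "bij p"
  shows "opmult (\<lambda>x y. A (p x) (p y)) (\<lambda>x y. B (p x) (p y)) x y = opmult A B (p x) (p y)"
  unfolding opmult_def by (rule sum.reindex_bij_betw[OF assms])

lemma oppow_reindex:
  fixes p :: "'i::finite \<Rightarrow> 'i"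
  assumes "bij p"
  shows "oppow (\<lambda>x y. A (p x) (p y)) k x y = oppow A k (p x) (p y)"
proof (induction k arbitrary: x y)
  case 0
  show ?case
    using bij_is_inj[OF assms] by (simp add: oppow_def idop_def inj_eq)
next
  case (Suc k)
  then have "oppow (\<lambda>x y. A (p x) (p y)) k = (\<lambda>x y. oppow A k (p x) (p y))"
    by (simp add: fun_eq_iff)
  then show ?case
    using opmult_reindex[OF assms, of A "oppow A k"] by (simp add: oppow_def)
qed

lemma opapply_reindex:
  fixes p :: "'i::finite \<Rightarrow> 'i"
  assumes "bij p"
  shows "opapply (\<lambda>x y. A (p x) (p y)) (\<lambda>x. v (p x)) x = opapply A v (p x)"
  unfolding opapply_def by (rule sum.reindex_bij_betw[OF assms])

definition monomial_op :: "('i \<Rightarrow> 'i) \<Rightarrow> ('i \<Rightarrow> complex) \<Rightarrow> ('i::finite) op" where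
  "monomial_op p w x y = (if x = p y then w y else 0)"

lemma opmult_monomial_op_right: "opmult A (monomial_op p w) x y = A x (p y) * w y"
  by (simp add: opmult_def monomial_op_def mult_if_zero cong: if_cong)

lemma opmult_monomial_op_left:
  assumes "\<And>x. p (p x) = x"
  shows "opmult (monomial_op p w) A x y = w (p x) * A (p x) y"
proof -
  have "x = p z \<longleftrightarrow> z = p x" for z
    using assms by metis
  then show ?thesis
    by (simp add: opmult_def monomial_op_def if_zero_mult cong: if_cong)
qed

lemma commutes_monomial_op_iff:
  assumes "\<And>x. p (p x) = x"
  shows "commutes A (monomial_op p w) \<longleftrightarrow> (\<forall>x y. A x (p y) * w y = w (p x) * A (p x) y)"
  by (simp add: commutes_def fun_eq_iff opmult_monomial_op_right opmult_monomial_op_left[OF assms])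

section \<open>Positive semidefinite operators\<close>

definition qform :: "('i::finite) Defs.vec \<Rightarrow> 'i op \<Rightarrow> complex" where
  "qform v A = (\<Sum>x\<in>UNIV. \<Sum>y\<in>UNIV. cnj (v x) * A x y * v y)"

lemma psd_iff_qform: "psd A \<longleftrightarrow> (\<forall>v. qform v A \<in> \<real> \<and> 0 \<le> Re (qform v A))"
  by (simp add: psd_def qform_def Let_def)

lemma psd_add: "psd A \<Longrightarrow> psd B \<Longrightarrow> psd (\<lambda>x y. A x y + B x y)"
  by (simp add: psd_iff_qform qform_def distrib_left distrib_right sum.distrib)

lemma qform_scale: "qform v (\<lambda>x y. c * A x y) = c * qform v A"
  by (simp add: qform_def sum_distrib_left mult_ac)

lemma psd_scale: "0 \<le> c \<Longrightarrow> psd A \<Longrightarrow> psd (\<lambda>x y. complex_of_real c * A x y)"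
  by (simp add: psd_iff_qform qform_scale)

lemma psd_reindex:
  fixes p :: "'i::finite \<Rightarrow> 'i"
  assumes "bij p" "psd A"
  shows "psd (\<lambda>x y. A (p x) (p y))"
  unfolding psd_iff_qform
proof
  fix v :: "'i Defs.vec"
  have reindex: "(\<Sum>z\<in>UNIV. F z) = (\<Sum>x\<in>UNIV. F (p x))" for F :: "'i \<Rightarrow> complex"
    by (rule sum.reindex_bij_betw[OF assms(1), symmetric])
  have "qform (v \<circ> inv p) A = qform v (\<lambda>x y. A (p x) (p y))"
    unfolding qform_def using assms(1) by (subst reindex, subst reindex) (simp add: bij_is_inj)
  then show "qform v (\<lambda>x y. A (p x) (p y)) \<in> \<real> \<and> 0 \<le> Re (qform v (\<lambda>x y. A (p x) (p y)))"
    using assms(2) unfolding psd_iff_qform by metis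
qed

lemma qform_block_diag:
  fixes k :: "'i::finite \<Rightarrow> 'k"
  shows "qform v (\<lambda>x y. if k x = k y then A x y else 0)
    = (\<Sum>c\<in>range k. qform (\<lambda>x. if k x = c then v x else 0) A)"
proof -
  have block: "(\<Sum>c\<in>range k. (if k x = c then cnj (v x) else 0) * A x y * (if k y = c then v y else 0))
      = (if k x = k y then cnj (v x) * A x y * v y else 0)" for x y
  proof -
    have "(\<Sum>c\<in>range k. (if k x = c then cnj (v x) else 0) * A x y * (if k y = c then v y else 0))
        = (\<Sum>c\<in>range k. if c = k x then (if k x = k y then cnj (v x) * A x y * v y else 0) else 0)"
      by (rule sum.cong) auto
    then show ?thesis by simp
  qed
  have "(\<Sum>c\<in>range k. qform (\<lambda>x. if k x = c then v x else 0) A)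
      = (\<Sum>x\<in>UNIV. \<Sum>y\<in>UNIV. \<Sum>c\<in>range k. (if k x = c then cnj (v x) else 0) * A x y * (if k y = c then v y else 0))"
    unfolding qform_def sum_distrib_left sum_distrib_right
    by (subst sum.swap, rule sum.cong[OF refl], subst sum.swap) (intro sum.cong refl; simp)
  also have "\<dots> = qform v (\<lambda>x y. if k x = k y then A x y else 0)"
    unfolding qform_def block by (intro sum.cong) auto
  finally show ?thesis ..
qed

lemma psd_block_diag:
  fixes k :: "'i::finite \<Rightarrow> 'k"
  assumes "psd A"
  shows "psd (\<lambda>x y. if k x = k y then A x y else 0)"
  using assms unfolding psd_iff_qform qform_block_diag by (auto intro: sum_nonneg)

lemma qform_point: "qform (\<lambda>z. if z = x then a else 0) A = cnj a * A x x * a"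
  by (simp add: qform_def if_zero_mult mult_if_zero if_distrib[of cnj] cong: if_cong)

lemma qform_two_points:
  assumes "x \<noteq> y"
  shows "qform (\<lambda>z. (if z = x then a else 0) + (if z = y then b else 0)) A
     = cnj a * A x x * a + cnj a * A x y * b + cnj b * A y x * a + cnj b * A y y * b"
  using assms
  by (simp add: qform_def distrib_left distrib_right sum.distrib if_zero_mult mult_if_zero
      if_distrib[of cnj] cong: if_cong)

lemma psd_diag:
  assumes "psd A"
  shows "A x x \<in> \<real>" "0 \<le> Re (A x x)"
  using assms unfolding psd_iff_qform by (metis qform_point mult_1_left mult_1_right complex_cnj_one)+

lemma psd_zero: "psd (\<lambda>x y. 0)"
  by (simp add: psd_iff_qform qform_def)

lemma psd_idop: "psd (idop :: ('i::finite) op)"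
  unfolding psd_iff_qform
proof
  fix v :: "'i Defs.vec"
  have "qform v idop = complex_of_real (\<Sum>x\<in>UNIV. (Re (v x))\<^sup>2 + (Im (v x))\<^sup>2)"
    by (simp add: qform_def idop_def complex_mult_cnj mult.commute if_zero_mult mult_if_zero cong: if_cong)
  moreover have "0 \<le> (\<Sum>x\<in>UNIV. (Re (v x))\<^sup>2 + (Im (v x))\<^sup>2)"
    by (simp add: sum_nonneg)
  ultimately show "qform v idop \<in> \<real> \<and> 0 \<le> Re (qform v idop)"
    by (simp only: Re_complex_of_real Reals_of_real simp_thms)
qed

lemma psd_entry_bound:
  assumes "psd A" "\<And>x. Re (A x x) \<le> 1"
  shows "cmod (A x y) \<le> 2"
proof (cases "x = y")
  case True
  then show ?thesis
    using cmod_le[of "A x x"] psd_diag[OF assms(1), of x] assms(2)[of x]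
    by (simp add: complex_is_Real_iff)
next
  case False
  have "qform (\<lambda>z. (if z = x then a else 0) + (if z = y then b else 0)) A \<in> \<real>
      \<and> 0 \<le> Re (qform (\<lambda>z. (if z = x then a else 0) + (if z = y then b else 0)) A)" for a b
    using assms(1) unfolding psd_iff_qform by blast
  then have q: "Im (cnj a * A x x * a + cnj a * A x y * b + cnj b * A y x * a + cnj b * A y y * b) = 0
      \<and> 0 \<le> Re (cnj a * A x x * a + cnj a * A x y * b + cnj b * A y x * a + cnj b * A y y * b)" for a b
    by (simp only: qform_two_points[OF False] complex_is_Real_iff)
  have diag: "Im (A z z) = 0" "0 \<le> Re (A z z)" "Re (A z z) \<le> 1" for z
    using psd_diag[OF assms(1), of z] assms(2)[of z] by (auto simp: complex_is_Real_iff)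
  \<comment> \<open>test vectors \<open>e\<^sub>x \<plusminus> e\<^sub>y\<close> and \<open>e\<^sub>x \<plusminus> \<i> e\<^sub>y\<close>\<close>
  have "Im (A x x + A x y + A y x + A y y) = 0 \<and> 0 \<le> Re (A x x + A x y + A y x + A y y)"
    using q[of 1 1] by simp
  moreover have "Im (A x x - A x y - A y x + A y y) = 0 \<and> 0 \<le> Re (A x x - A x y - A y x + A y y)"
    using q[of 1 "-1"] by simp
  moreover have "Im (A x x + \<i> * A x y - \<i> * A y x + A y y) = 0
      \<and> 0 \<le> Re (A x x + \<i> * A x y - \<i> * A y x + A y y)"
    using q[of 1 "\<i>"] by (simp add: algebra_simps)
  moreover have "Im (A x x - \<i> * A x y + \<i> * A y x + A y y) = 0
      \<and> 0 \<le> Re (A x x - \<i> * A x y + \<i> * A y x + A y y)"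
    using q[of 1 "-\<i>"] by (simp add: algebra_simps)
  ultimately have "\<bar>Re (A x y)\<bar> \<le> 1" "\<bar>Im (A x y)\<bar> \<le> 1"
    using diag[of x] diag[of y] by auto
  then show ?thesis
    using cmod_le[of "A x y"] by linarith
qed

section \<open>Twirling\<close>

text \<open>
  The average over the group generated by the involution \<open>p\<close> and by the diagonal phase
  operators that are constant on the level sets of \<open>k\<close>; the phase average erases the entries
  between different levels.
\<close>

definition twirl :: "('i \<Rightarrow> 'i) \<Rightarrow> ('i \<Rightarrow> 'k) \<Rightarrow> ('i::finite) op \<Rightarrow> 'i op" where
  "twirl p k A x y = (if k x = k y then (A x y + A (p x) (p y)) / 2 else 0)"

lemma psd_twirl:
  assumes "bij p" "psd A"
  shows "psd (twirl p k A)"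
proof -
  have "psd (\<lambda>x y. A x y + A (p x) (p y))"
    using psd_add[OF assms(2) psd_reindex[OF assms]] .
  then have "psd (\<lambda>x y. complex_of_real (1/2) * (A x y + A (p x) (p y)))"
    by (rule psd_scale[rotated]) simp
  then have "psd (\<lambda>x y. if k x = k y then complex_of_real (1/2) * (A x y + A (p x) (p y)) else 0)"
    by (rule psd_block_diag)
  moreover have "twirl p k A = (\<lambda>x y. if k x = k y then complex_of_real (1/2) * (A x y + A (p x) (p y)) else 0)"
    by (simp add: fun_eq_iff twirl_def)
  ultimately show ?thesis
    by simp
qed

lemma twirl_idop: "inj p \<Longrightarrow> twirl p k idop = idop"
  by (auto simp: fun_eq_iff twirl_def idop_def inj_eq)

lemma twirl_op_diff: "twirl p k (op_diff A B) = op_diff (twirl p k A) (twirl p k B)"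
  by (simp add: fun_eq_iff twirl_def op_diff_def diff_divide_distrib[symmetric] add_diff_add)

lemma twirl_invariant_reindex:
  assumes "\<And>x. p (p x) = x" "\<And>x y. k (p x) = k (p y) \<longleftrightarrow> k x = k y"
  shows "twirl p k A (p x) (p y) = twirl p k A x y"
  using assms by (simp add: twirl_def add.commute)

lemma trace_twirl_mult:
  fixes A :: "('i::finite) op"
  assumes "bij p"
    and block: "\<And>z x. k z \<noteq> k x \<Longrightarrow> D z x = 0"
    and invariant: "\<And>z x. D (p z) (p x) = D z x"
  shows "Defs.trace (opmult (twirl p k A) D) = Defs.trace (opmult A D)"
proof -
  have reindex: "(\<Sum>z\<in>UNIV. F z) = (\<Sum>x\<in>UNIV. F (p x))" for F :: "'i \<Rightarrow> complex"
    by (rule sum.reindex_bij_betw[OF assms(1), symmetric])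
  have entry: "twirl p k A x z * D z x = (A x z * D z x + A (p x) (p z) * D (p z) (p x)) / 2" for x z
    by (cases "k z = k x") (simp_all add: twirl_def block invariant add_divide_distrib distrib_right)
  have "(\<Sum>x\<in>UNIV. \<Sum>z\<in>UNIV. A (p x) (p z) * D (p z) (p x)) = (\<Sum>x\<in>UNIV. \<Sum>z\<in>UNIV. A x z * D z x)"
    by (subst (2) reindex, subst (2) reindex) (rule refl)
  then show ?thesis
    by (simp add: Defs.trace_def opmult_def entry sum.distrib sum_divide_distrib[symmetric])
qed

section \<open>The qubit symmetry\<close>

definition flip3 :: "idx3 \<Rightarrow> idx3" where
  "flip3 = (\<lambda>(a0, a1, a2). (\<not> a0, \<not> a1, \<not> a2))"

definition flip2 :: "idx2 \<Rightarrow> idx2" where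
  "flip2 = (\<lambda>(a1, a2). (\<not> a1, \<not> a2))"

definition charge :: "idx3 \<Rightarrow> int" where
  "charge = (\<lambda>(a0, a1, a2). int (bit a1) - int (bit a2))"

definition phase :: "real \<Rightarrow> real \<Rightarrow> idx3 \<Rightarrow> complex" where
  "phase \<beta> \<gamma> = (\<lambda>(a0, a1, a2). Zop \<beta> \<gamma> a1 a1 * cnj (Zop \<beta> \<gamma> a2 a2))"

lemma flip3_flip3 [simp]: "flip3 (flip3 x) = x"
  by (cases x) (simp add: flip3_def)

lemma flip2_flip2 [simp]: "flip2 (flip2 x) = x"
  by (cases x) (simp add: flip2_def)

lemma bij_flip3: "bij flip3"
  by (rule o_bij[of flip3]) (auto simp: fun_eq_iff)

lemma bij_flip2: "bij flip2"
  by (rule o_bij[of flip2]) (auto simp: fun_eq_iff)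

lemma charge_flip3 [simp]: "charge (flip3 x) = - charge x"
  by (auto simp: charge_def flip3_def bit_def split: prod.splits)

lemma phase_eq_if_charge_eq: "charge x = charge y \<Longrightarrow> phase \<beta> \<gamma> x = phase \<beta> \<gamma> y"
  by (auto simp: charge_def phase_def bit_def Zop_def cis_cnj cis_mult split: prod.splits if_splits)

lemma Wop_eq_monomial_op: "Wop \<beta> \<gamma> l = monomial_op (if l = 0 then id else flip3) (phase \<beta> \<gamma>)"
  by (auto simp: fun_eq_iff Wop_def tensor3_def sigma_l_def opmult_def idop_def
      sigma_x_def Zop_def conjop_def sum_UNIV_bool monomial_op_def phase_def flip3_def)

lemma W_invariant_twirl: "W_invariant (twirl flip3 charge R)"
  unfolding W_invariant_def
proof (intro allI ballI)
  fix \<beta> \<gamma> :: real and l :: nat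
  define p where "p = (if l = 0 then id else flip3)"
  have involution: "p (p x) = x" for x
    by (simp add: p_def)
  have charge_p: "charge (p x) = charge (p y) \<longleftrightarrow> charge x = charge y" for x y
    by (auto simp: p_def)
  have "twirl flip3 charge R x (p y) * phase \<beta> \<gamma> y
      = phase \<beta> \<gamma> (p x) * twirl flip3 charge R (p x) y" for x y
  proof (cases "charge x = charge (p y)")
    case True
    then have "phase \<beta> \<gamma> (p x) = phase \<beta> \<gamma> y"
      by (metis charge_p involution phase_eq_if_charge_eq)
    moreover have "twirl flip3 charge R (p x) y = twirl flip3 charge R x (p y)"
      using twirl_invariant_reindex[of flip3 charge R x "flip3 y"] by (simp add: p_def)
    ultimately show ?thesis
      by (simp add: mult.commute)
  next
    case False
    then have "charge (p x) \<noteq> charge y"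
      by (metis charge_p involution)
    with False show ?thesis
      by (simp add: twirl_def)
  qed
  then show "commutes (twirl flip3 charge R) (Wop \<beta> \<gamma> l)"
    unfolding Wop_eq_monomial_op p_def[symmetric] commutes_monomial_op_iff[OF involution] by blast
qed

lemma W_invariant_flip3:
  assumes "W_invariant R"
  shows "R (flip3 x) (flip3 y) = R x y"
proof -
  have "phase 0 0 = (\<lambda>_. 1)"
    by (auto simp: fun_eq_iff phase_def Zop_def)
  moreover have "commutes R (Wop 0 0 1)"
    using assms by (simp add: W_invariant_def)
  ultimately have "commutes R (monomial_op flip3 (\<lambda>_. 1))"
    by (simp add: Wop_eq_monomial_op)
  then show ?thesis
    unfolding commutes_monomial_op_iff[OF flip3_flip3] by (metis flip3_flip3 mult_1_left mult_1_right)
qed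

lemma Uop_Suc_0: "Uop \<alpha> (Suc 0) x y = Uop \<alpha> 0 (\<not> x) (\<not> y)"
  by (simp add: Uop_def)

lemma bij_Not: "bij Not"
  by (rule o_bij[of Not]) (auto simp: fun_eq_iff)

lemma psi_conj_Suc_0: "psi_conj \<alpha> n (Suc 0) x = psi_conj \<alpha> n 0 (\<not> x)"
proof -
  have conj_U1: "conjop (Uop \<alpha> (Suc 0)) = (\<lambda>x y. conjop (Uop \<alpha> 0) (\<not> x) (\<not> y))"
    by (simp add: fun_eq_iff conjop_def Uop_def)
  have plus_Not: "(\<lambda>x. plus_state (\<not> x)) = plus_state"
    by (simp add: fun_eq_iff plus_state_def)
  show ?thesis
    using opapply_reindex[OF bij_Not, of "oppow (conjop (Uop \<alpha> 0)) n" plus_state x]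
    unfolding psi_conj_def conj_U1 oppow_reindex[OF bij_Not, abs_def] plus_Not .
qed

lemma PP_retrieval_constants_eq_if_W_invariant:
  assumes "PP_feasible_with \<alpha> n R lam0 lam1" "W_invariant R"
  shows "lam0 = lam1"
proof -
  have lam0: "pinner0 (psi_conj \<alpha> n 0) R (True, True) (True, True) = lam0"
    using assms(1) by (simp add: PP_feasible_with_def op_scale_def ketbra_def dket_def Uop_def cis_cnj cis_mult)
  have lam1: "pinner0 (psi_conj \<alpha> n 1) R (False, False) (False, False) = lam1"
    using assms(1) by (simp add: PP_feasible_with_def op_scale_def ketbra_def dket_def Uop_def cis_cnj cis_mult)
  have "R (a, False, False) (b, False, False) = R (\<not> a, True, True) (\<not> b, True, True)" for a b
    using W_invariant_flip3[OF assms(2), of "(a, False, False)" "(b, False, False)"] by (simp add: flip3_def)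
  then have "pinner0 (psi_conj \<alpha> n 1) R (False, False) (False, False)
      = pinner0 (psi_conj \<alpha> n 0) R (True, True) (True, True)"
    by (simp add: pinner0_def sum_UNIV_bool psi_conj_Suc_0 add_ac)
  with lam0 lam1 show ?thesis
    by simp
qed

lemma Dop_block: "charge z \<noteq> charge x \<Longrightarrow> Dop \<alpha> n z x = 0"
  by (auto simp: Dop_def tensor12_def ketbra_def dket_def Uop_def charge_def split: prod.splits)

lemma Dop_flip3: "Dop \<alpha> n (flip3 z) (flip3 x) = Dop \<alpha> n z x"
  by (auto simp: Dop_def tensor12_def ketbra_def dket_def flip3_def psi_conj_Suc_0 Uop_Suc_0 algebra_simps
      split: prod.splits)

lemma objective_twirl: "objective \<alpha> n (twirl flip3 charge R) = objective \<alpha> n R"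
  unfolding objective_def using trace_twirl_mult[OF bij_flip3, of charge "Dop \<alpha> n"] Dop_block Dop_flip3 by simp

lemma ptrace2_twirl: "ptrace2 (twirl flip3 charge R) = twirl flip2 snd (ptrace2 R)"
  by (auto simp: fun_eq_iff ptrace2_def twirl_def charge_def bit_def flip3_def flip2_def sum_UNIV_bool
      add_divide_distrib)

lemma pinner0_twirl:
  "pinner0 \<phi> (twirl flip3 charge R) (a1, a2) (b1, b2) =
    (if charge (False, a1, a2) = charge (False, b1, b2)
     then (pinner0 \<phi> R (a1, a2) (b1, b2) + pinner0 (\<lambda>z. \<phi> (\<not> z)) R (\<not> a1, \<not> a2) (\<not> b1, \<not> b2)) / 2
     else 0)"
  by (cases a1; cases a2; cases b1; cases b2)
    (simp_all add: pinner0_def twirl_def charge_def bit_def flip3_def sum_UNIV_bool field_simps)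

abbreviation Uproj :: "real \<Rightarrow> nat \<Rightarrow> idx2 op" where
  "Uproj \<alpha> i \<equiv> ketbra (dket (Uop \<alpha> i)) (dket (Uop \<alpha> i))"

lemma retrieval_twirl:
  assumes "pinner0 (psi_conj \<alpha> n 0) R = op_scale (complex_of_real l0) (Uproj \<alpha> 0)"
    and "pinner0 (psi_conj \<alpha> n (Suc 0)) R = op_scale (complex_of_real l1) (Uproj \<alpha> (Suc 0))"
    and "i \<in> {0, Suc 0}"
  shows "pinner0 (psi_conj \<alpha> n i) (twirl flip3 charge R) = op_scale (complex_of_real ((l0 + l1) / 2)) (Uproj \<alpha> i)"
proof (intro ext)
  fix a b :: idx2
  obtain a1 a2 b1 b2 where ab: "a = (a1, a2)" "b = (b1, b2)"
    by fastforce
  have flip_psi: "(\<lambda>z. psi_conj \<alpha> n 0 (\<not> z)) = psi_conj \<alpha> n (Suc 0)"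
    "(\<lambda>z. psi_conj \<alpha> n (Suc 0) (\<not> z)) = psi_conj \<alpha> n 0"
    by (simp_all add: fun_eq_iff psi_conj_Suc_0)
  show "pinner0 (psi_conj \<alpha> n i) (twirl flip3 charge R) a b = op_scale (complex_of_real ((l0 + l1) / 2)) (Uproj \<alpha> i) a b"
    using assms(3) unfolding ab pinner0_twirl
    by (elim insertE emptyE; simp only: flip_psi assms(1,2);
        cases a1; cases a2; cases b1; cases b2)
      (simp_all add: op_scale_def ketbra_def dket_def Uop_def charge_def bit_def field_simps)
qed

lemma AD_feasible_twirl: "AD_feasible R \<Longrightarrow> AD_feasible (twirl flip3 charge R)"
  by (simp add: AD_feasible_def psd_twirl[OF bij_flip3] ptrace2_twirl twirl_idop[OF bij_is_inj[OF bij_flip2]])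

lemma PP_feasible_with_twirl:
  assumes "PP_feasible_with \<alpha> n R l0 l1"
  shows "PP_feasible_with \<alpha> n (twirl flip3 charge R) ((l0 + l1) / 2) ((l0 + l1) / 2)"
proof -
  have "psd (op_diff idop (ptrace2 (twirl flip3 charge R)))"
    using assms psd_twirl[OF bij_flip2, of "op_diff idop (ptrace2 R)" snd]
    by (simp add: PP_feasible_with_def ptrace2_twirl twirl_op_diff twirl_idop[OF bij_is_inj[OF bij_flip2]])
  then show ?thesis
    using assms psd_twirl[OF bij_flip3, of R charge] retrieval_twirl[of \<alpha> n R l0 l1]
    by (simp add: PP_feasible_with_def)
qed

lemma AD_optimal_twirl: "AD_optimal \<alpha> n R \<Longrightarrow> AD_optimal \<alpha> n (twirl flip3 charge R)"
  by (simp add: AD_optimal_def AD_feasible_twirl objective_twirl)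

lemma PP_optimal_twirl: "PP_optimal \<alpha> n R \<Longrightarrow> PP_optimal \<alpha> n (twirl flip3 charge R)"
  unfolding PP_optimal_def PP_feasible_def by (metis PP_feasible_with_twirl objective_twirl)

section \<open>Existence of optimal solutions\<close>

lemma continuous_on_entry [continuous_intros]:
  "continuous_on S (\<lambda>R::'a \<Rightarrow> 'b \<Rightarrow> 'c::topological_space. R x y)"
proof -
  have "continuous_on UNIV (\<lambda>R::'a \<Rightarrow> 'b \<Rightarrow> 'c. R x y)"
    using continuous_on_compose2[OF continuous_on_product_coordinates continuous_on_product_coordinates]
    by simp
  then show ?thesis
    by (rule continuous_on_subset) simp
qed

lemma compact_entrywise_bounded: "compact {R :: 'a \<Rightarrow> 'b \<Rightarrow> complex. \<forall>x y. cmod (R x y) \<le> r}"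
proof -
  have rows: "compact (PiE UNIV (\<lambda>_::'b. cball (0::complex) r))"
    using compactin_PiE[of "\<lambda>_. euclidean" UNIV "\<lambda>_::'b. cball (0::complex) r"]
    by (simp add: euclidean_product_topology)
  have "compact (PiE UNIV (\<lambda>_::'a. PiE UNIV (\<lambda>_::'b. cball (0::complex) r)))"
    using compactin_PiE[of "\<lambda>_. euclidean" UNIV "\<lambda>_::'a. PiE UNIV (\<lambda>_::'b. cball (0::complex) r)"] rows
    by (simp add: euclidean_product_topology)
  moreover have "PiE UNIV (\<lambda>_::'a. PiE UNIV (\<lambda>_::'b. cball (0::complex) r))
      = {R. \<forall>x y. cmod (R x y) \<le> r}"
    by (auto simp: PiE_UNIV_domain Pi_iff)
  ultimately show ?thesis
    by simp
qed

lemma exists_maximizer_entrywise_bounded: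
  fixes F :: "('a \<Rightarrow> 'b \<Rightarrow> complex) set" and f :: "_ \<Rightarrow> real"
  assumes "closed F" "F \<noteq> {}" "\<And>R x y. R \<in> F \<Longrightarrow> cmod (R x y) \<le> r" "continuous_on F f"
  shows "\<exists>R\<in>F. \<forall>R'\<in>F. f R' \<le> f R"
proof -
  have "compact ({R. \<forall>x y. cmod (R x y) \<le> r} \<inter> F)"
    by (rule compact_Int_closed[OF compact_entrywise_bounded assms(1)])
  moreover have "{R. \<forall>x y. cmod (R x y) \<le> r} \<inter> F = F"
    using assms(3) by blast
  ultimately have "compact F"
    by simp
  then show ?thesis
    using continuous_attains_sup assms(2,4) by blast
qed

lemma closed_psd:
  fixes f :: "'a::topological_space \<Rightarrow> ('i::finite) op"
  assumes "\<And>x y. continuous_on UNIV (\<lambda>R. f R x y)"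
  shows "closed {R. psd (f R)}"
  unfolding psd_iff_qform complex_is_Real_iff qform_def
  by (intro closed_Collect_all closed_Collect_conj closed_Collect_eq closed_Collect_le
      continuous_intros assms)

lemma closed_psd_set: "closed {R :: ('i::finite) op. psd R}"
  using closed_psd[of "\<lambda>R. R", OF continuous_on_entry] by simp

lemma scaled_ray_iff:
  assumes "M e e' = 1"
  shows "(\<exists>l\<ge>0. P = op_scale (complex_of_real l) M) \<longleftrightarrow>
    (\<forall>a b. P a b = P e e' * M a b) \<and> Im (P e e') = 0 \<and> 0 \<le> Re (P e e')"
proof
  assume "\<exists>l\<ge>0. P = op_scale (complex_of_real l) M"
  then obtain l where "0 \<le> l" "P = op_scale (complex_of_real l) M"
    by blast
  then show "(\<forall>a b. P a b = P e e' * M a b) \<and> Im (P e e') = 0 \<and> 0 \<le> Re (P e e')"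
    using assms by (simp add: op_scale_def)
next
  assume P: "(\<forall>a b. P a b = P e e' * M a b) \<and> Im (P e e') = 0 \<and> 0 \<le> Re (P e e')"
  define l where "l = Re (P e e')"
  have "P e e' = complex_of_real l"
    using conjunct1[OF conjunct2[OF P]] by (simp add: l_def complex_eq_iff)
  moreover have "P a b = P e e' * M a b" for a b
    using P by blast
  ultimately have "P = op_scale (complex_of_real l) M"
    unfolding op_scale_def by metis
  moreover have "0 \<le> l"
    unfolding l_def using P by blast
  ultimately show "\<exists>l\<ge>0. P = op_scale (complex_of_real l) M"
    by blast
qed

lemma closed_scaled_ray:
  fixes f :: "'a::topological_space \<Rightarrow> ('i::finite) op"
  assumes "M e e' = 1" "\<And>a b. continuous_on UNIV (\<lambda>R. f R a b)"
  shows "closed {R. \<exists>l\<ge>0. f R = op_scale (complex_of_real l) M}"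
  unfolding scaled_ray_iff[of M e e', OF assms(1)]
  by (intro closed_Collect_all closed_Collect_conj closed_Collect_eq closed_Collect_le
      continuous_intros assms)

lemma continuous_on_ptrace2_entry [continuous_intros]: "continuous_on S (\<lambda>R. ptrace2 R a b)"
  by (cases a; cases b) (simp add: ptrace2_def; intro continuous_intros)

lemma continuous_on_pinner0_entry [continuous_intros]: "continuous_on S (\<lambda>R. pinner0 \<phi> R a b)"
  by (cases a; cases b) (simp add: pinner0_def; intro continuous_intros)

lemma continuous_on_objective: "continuous_on S (objective \<alpha> n)"
  unfolding objective_def[abs_def] Defs.trace_def opmult_def by (intro continuous_intros)

lemma entry_bound_if_ptrace2_diag_le_one:
  assumes "psd R" "\<And>a. Re (ptrace2 R a a) \<le> 1"
  shows "cmod (R x y) \<le> 2"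
proof (rule psd_entry_bound[OF assms(1)])
  fix z :: idx3
  obtain z0 z1 z2 where z: "z = (z0, z1, z2)"
    by (cases z)
  have "Re (R (z0, z1, True) (z0, z1, True)) + Re (R (z0, z1, False) (z0, z1, False)) \<le> 1"
    using assms(2)[of "(z0, z1)"] by (simp add: ptrace2_def sum_UNIV_bool)
  moreover have "0 \<le> Re (R (z0, z1, True) (z0, z1, True))" "0 \<le> Re (R (z0, z1, False) (z0, z1, False))"
    using psd_diag(2)[OF assms(1)] by blast+
  ultimately show "Re (R z z) \<le> 1"
    unfolding z by (cases z2) auto
qed

lemma AD_feasible_entry_bound: "AD_feasible R \<Longrightarrow> cmod (R x y) \<le> 2"
  by (rule entry_bound_if_ptrace2_diag_le_one) (simp_all add: AD_feasible_def idop_def)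

lemma PP_feasible_entry_bound:
  assumes "PP_feasible \<alpha> n R"
  shows "cmod (R x y) \<le> 2"
proof (rule entry_bound_if_ptrace2_diag_le_one)
  show "psd R" "Re (ptrace2 R a a) \<le> 1" for a
    using assms psd_diag(2)[of "op_diff idop (ptrace2 R)" a]
    by (auto simp: PP_feasible_def PP_feasible_with_def op_diff_def idop_def)
qed

lemma closed_AD_feasible: "closed {R. AD_feasible R}"
  unfolding AD_feasible_def fun_eq_iff
  by (intro closed_Collect_conj closed_psd_set closed_Collect_all closed_Collect_eq continuous_intros)

lemma closed_PP_feasible: "closed {R. PP_feasible \<alpha> n R}"
proof -
  have Uproj_11: "Uproj \<alpha> i (False, False) (False, False) = 1" for i
    by (simp add: ketbra_def dket_def Uop_def cis_cnj cis_mult)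
  have retrieval: "closed {R. \<exists>l\<ge>0. pinner0 (psi_conj \<alpha> n i) R = op_scale (complex_of_real l) (Uproj \<alpha> i)}" for i
    by (rule closed_scaled_ray[where M = "Uproj \<alpha> i", OF Uproj_11]) (rule continuous_intros)
  have "{R. PP_feasible \<alpha> n R} = {R. psd R} \<inter> {R. psd (op_diff idop (ptrace2 R))}
      \<inter> {R. \<exists>l\<ge>0. pinner0 (psi_conj \<alpha> n 0) R = op_scale (complex_of_real l) (Uproj \<alpha> 0)}
      \<inter> {R. \<exists>l\<ge>0. pinner0 (psi_conj \<alpha> n 1) R = op_scale (complex_of_real l) (Uproj \<alpha> 1)}"
    by (auto simp: PP_feasible_def PP_feasible_with_def)
  also have "closed \<dots>"
    by (intro closed_Int closed_psd_set retrieval closed_psd) (simp add: op_diff_def; intro continuous_intros)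
  finally show ?thesis .
qed

lemma AD_feasible_half_idop: "AD_feasible (\<lambda>x y. complex_of_real (1/2) * idop x y)"
proof -
  have "ptrace2 (\<lambda>x y. complex_of_real (1/2) * idop x y) = idop"
    by (auto simp: fun_eq_iff ptrace2_def idop_def sum_UNIV_bool)
  moreover have "psd (\<lambda>x y. complex_of_real (1/2) * (idop :: idx3 op) x y)"
    by (rule psd_scale) (simp_all add: psd_idop)
  ultimately show ?thesis
    by (simp add: AD_feasible_def)
qed

lemma PP_feasible_with_zero: "PP_feasible_with \<alpha> n (\<lambda>x y. 0) 0 0"
proof -
  have "op_diff idop (ptrace2 (\<lambda>x y. 0)) = idop"
    by (simp add: fun_eq_iff op_diff_def ptrace2_def)
  moreover have "pinner0 \<phi> (\<lambda>x y. 0) = op_scale 0 M" for \<phi> M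
    by (simp add: fun_eq_iff pinner0_def op_scale_def)
  ultimately show ?thesis
    by (simp add: PP_feasible_with_def psd_zero psd_idop)
qed

lemma exists_AD_optimal: "\<exists>R. AD_optimal \<alpha> n R"
proof -
  have "\<exists>R\<in>{R. AD_feasible R}. \<forall>R'\<in>{R. AD_feasible R}. objective \<alpha> n R' \<le> objective \<alpha> n R"
  proof (rule exists_maximizer_entrywise_bounded)
    show "{R. AD_feasible R} \<noteq> {}"
      using AD_feasible_half_idop by blast
    show "cmod (R x y) \<le> 2" if "R \<in> {R. AD_feasible R}" for R x y
      using that AD_feasible_entry_bound by blast
  qed (rule closed_AD_feasible continuous_on_objective)+
  then show ?thesis
    by (auto simp: AD_optimal_def)
qed

lemma exists_PP_optimal: "\<exists>R. PP_optimal \<alpha> n R"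
proof -
  have "\<exists>R\<in>{R. PP_feasible \<alpha> n R}. \<forall>R'\<in>{R. PP_feasible \<alpha> n R}. objective \<alpha> n R' \<le> objective \<alpha> n R"
  proof (rule exists_maximizer_entrywise_bounded)
    show "{R. PP_feasible \<alpha> n R} \<noteq> {}"
      using PP_feasible_with_zero unfolding PP_feasible_def by blast
    show "cmod (R x y) \<le> 2" if "R \<in> {R. PP_feasible \<alpha> n R}" for R x y
      using that PP_feasible_entry_bound by blast
  qed (rule closed_PP_feasible continuous_on_objective)+
  then show ?thesis
    by (auto simp: PP_optimal_def)
qed

theorem lemma1:
  fixes n :: nat and \<alpha> :: real
  assumes "n \<ge> 1" and "0 < \<alpha>" and "\<alpha> < pi / (4 * real n)"
  shows "((\<exists>R. AD_optimal \<alpha> n R \<and> W_invariant R) \<and>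
          (\<exists>Rs. PP_optimal \<alpha> n Rs \<and> W_invariant Rs)) \<and>
         (\<forall>Rs lam0 lam1. PP_feasible_with \<alpha> n Rs lam0 lam1 \<and> W_invariant Rs \<longrightarrow> lam0 = lam1)"
  \<comment> \<open>The symmetry argument works for every \<open>n\<close> and \<open>\<alpha>\<close>.\<close>
proof -
  obtain R where "AD_optimal \<alpha> n R"
    using exists_AD_optimal by blast
  moreover obtain Rs where "PP_optimal \<alpha> n Rs"
    using exists_PP_optimal by blast
  ultimately show ?thesis
    using AD_optimal_twirl PP_optimal_twirl W_invariant_twirl PP_retrieval_constants_eq_if_W_invariant
    by blast
qed

end
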